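(* Let $P$ be a probability distribution on $\mathbb{R}^d$ supported in $\{x:\|x\|_2\le C\}$. Let $v_1,\dots,v_m\in\mathbb{R}^d$, $w_1,\dots,w_m>0$, $Z_i:=\mathbb E_{X\sim P}\exp(\langle v_i,X\rangle)$, and $$Q_G:=\sum_{i=1}^m\pi_iP_{v_i},\qquad \pi_i:=\frac{w_iZ_i}{\sum_j w_jZ_j}.$$ Let $\eta\in(0,1)$ and suppose $\widehat Z_i\in[(1-\eta)Z_i,(1+\eta)Z_i]$ for all $i$, and let $\widehat\pi_i:=\frac{w_i\widehat Z_i}{\sum_j w_j\widehat Z_j}$. Suppose further that for every $i$, $\widehat P_{v_i}$ is a probability distribution with $\mathcal W_2(\widehat P_{v_i},P_{v_i})\le\epsilon_{\mathrm{lin}}$ and $\operatorname{supp}(\widehat P_{v_i})\subseteq\{x:\|x\|_2\le C\}$. Let $\widehat Q_G:=\sum_{i=1}^m\widehat\pi_i\widehat P_{v_i}$. Then $$\mathcal W_2(\widehat Q_G,Q_G)\le\epsilon_{\mathrm{lin}}+2C\sqrt{\frac{\eta}{1-\eta}}.$$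
   Context: For $v\in\mathbb{R}^d$, $P_v(dx):=\frac{\exp(\langle v,x\rangle)}{Z_P(v)}P(dx)$ with $Z_P(v)=\mathbb E_{X\sim P}\exp(\langle v,X\rangle)$ is the linear exponential tilt of $P$. $\mathcal W_2$ is the Wasserstein-2 distance with Euclidean cost. *)

theory Defs
  imports "HOL-Probability.Probability"
begin

definition tilt_const :: "'a::euclidean_space measure \<Rightarrow> 'a \<Rightarrow> real" where
  "tilt_const P v = (\<integral>x. exp (v \<bullet> x) \<partial>P)"

definition exp_tilt :: "'a::euclidean_space measure \<Rightarrow> 'a \<Rightarrow> 'a measure" where
  "exp_tilt P v = density P (\<lambda>x. ennreal (exp (v \<bullet> x) / tilt_const P v))"

definition mixture :: "nat \<Rightarrow> (nat \<Rightarrow> real) \<Rightarrow> (nat \<Rightarrow> 'a::euclidean_space measure) \<Rightarrow> 'a measure" where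
  "mixture m p Q = measure_of UNIV (sets borel)
      (\<lambda>A. \<Sum>i<m. ennreal (p i) * emeasure (Q i) A)"

definition couplings :: "'a::euclidean_space measure \<Rightarrow> 'a measure \<Rightarrow> ('a \<times> 'a) measure set" where
  "couplings P Q = {\<mu>. sets \<mu> = sets (borel \<Otimes>\<^sub>M borel) \<and> prob_space \<mu> \<and>
      distr \<mu> borel fst = P \<and> distr \<mu> borel snd = Q}"

text \<open>Wasserstein-2 distance with Euclidean cost (as a real number; finite for the
  boundedly supported measures considered here).\<close>
definition W2 :: "'a::euclidean_space measure \<Rightarrow> 'a measure \<Rightarrow> real" where
  "W2 P Q = sqrt (enn2real (INF \<mu>\<in>couplings P Q.
      \<integral>\<^sup>+ z. ennreal ((norm (fst z - snd z))\<^sup>2) \<partial>\<mu>))"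

end

theory Submission
  imports Defs
begin

text \<open>Couple the two mixtures through a maximal coupling of their weight vectors: with
  probability min(\<pi>hat_i, \<pi>_i) both sides draw component i, and then a near-optimal
  W2-coupling of Phat_i and P_{v_i} costs about \<epsilon>lin^2; the remaining mass is the total
  variation distance of the weights, where the components are drawn independently at cost at
  most (2C)^2 because all supports lie in the ball of radius C. The weights are ratios of
  (1 \<plusminus> \<eta>)-accurate estimates, so their total variation distance is at most \<eta>/(1-\<eta>), and
  W2^2 \<le> \<epsilon>lin^2 + 4C^2 \<eta>/(1-\<eta>) \<le> (\<epsilon>lin + 2C sqrt(\<eta>/(1-\<eta>)))^2.\<close>

section \<open>Finite mixtures of measures\<close>

text \<open>\<open>mixture\<close> over an arbitrary finite index set, so that couplings can be indexed by pairs.\<close>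
definition mix :: "'i set \<Rightarrow> ('i \<Rightarrow> real) \<Rightarrow> ('i \<Rightarrow> 'b::topological_space measure) \<Rightarrow> 'b measure" where
  "mix I p Q = measure_of UNIV (sets borel) (\<lambda>A. \<Sum>i\<in>I. ennreal (p i) * emeasure (Q i) A)"

lemma mixture_eq_mix: "mixture m p Q = mix {..<m} p Q"
  by (simp add: mixture_def mix_def)

lemma sets_mix [simp, measurable_cong]: "sets (mix I p Q) = sets borel"
  unfolding mix_def using sets.sigma_sets_eq[of borel] by (simp add: sets_measure_of_conv)

lemma space_mix [simp]: "space (mix I p Q) = UNIV"
  unfolding mix_def by simp

lemma mix_cong:
  "(\<And>i. i \<in> I \<Longrightarrow> p i = q i) \<Longrightarrow> (\<And>i. i \<in> I \<Longrightarrow> M i = N i) \<Longrightarrow> mix I p M = mix I q N"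
  unfolding mix_def by (simp cong: sum.cong)

lemma emeasure_mix:
  assumes "finite I" "\<And>i. i \<in> I \<Longrightarrow> sets (Q i) = sets borel" "A \<in> sets borel"
  shows "emeasure (mix I p Q) A = (\<Sum>i\<in>I. ennreal (p i) * emeasure (Q i) A)"
  unfolding mix_def
proof (rule emeasure_measure_of_sigma)
  show "sigma_algebra UNIV (sets borel)"
    using sets.sigma_algebra_axioms[of borel] by simp
  show "positive (sets borel) (\<lambda>A. \<Sum>i\<in>I. ennreal (p i) * emeasure (Q i) A)"
    by (simp add: positive_def)
  show "countably_additive (sets borel) (\<lambda>A. \<Sum>i\<in>I. ennreal (p i) * emeasure (Q i) A)"
  proof (rule countably_additiveI)
    fix A :: "nat \<Rightarrow> 'b set" assume A: "range A \<subseteq> sets borel" "disjoint_family A"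
    have "(\<Sum>n. \<Sum>i\<in>I. ennreal (p i) * emeasure (Q i) (A n))
        = (\<Sum>i\<in>I. ennreal (p i) * (\<Sum>n. emeasure (Q i) (A n)))"
      by (subst suminf_sum) auto
    also have "\<dots> = (\<Sum>i\<in>I. ennreal (p i) * emeasure (Q i) (\<Union>n. A n))"
      using A assms(2) by (intro sum.cong refl) (simp add: suminf_emeasure)
    finally show "(\<Sum>n. \<Sum>i\<in>I. ennreal (p i) * emeasure (Q i) (A n))
        = (\<Sum>i\<in>I. ennreal (p i) * emeasure (Q i) (\<Union>n. A n))" .
  qed
qed fact

lemma nn_integral_mix:
  assumes I: "finite I" and Q: "\<And>i. i \<in> I \<Longrightarrow> sets (Q i) = sets borel"
    and f: "f \<in> borel_measurable borel"
  shows "(\<integral>\<^sup>+x. f x \<partial>mix I p Q) = (\<Sum>i\<in>I. ennreal (p i) * (\<integral>\<^sup>+x. f x \<partial>Q i))"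
  using f[folded measurable_cong_sets[OF sets_mix refl, of I p Q]]
proof (induction rule: borel_measurable_induct)
  case (cong f g)
  then have "\<And>i. i \<in> I \<Longrightarrow> (\<integral>\<^sup>+x. f x \<partial>Q i) = (\<integral>\<^sup>+x. g x \<partial>Q i)"
    by (intro nn_integral_cong) auto
  with cong show ?case by (simp cong: nn_integral_cong)
next
  case (set A)
  with I Q show ?case by (simp add: emeasure_mix)
next
  case (mult u c)
  with Q have "u \<in> borel_measurable (Q i)" if "i \<in> I" for i
    using that by (simp cong: measurable_cong_sets)
  with mult show ?case
    by (simp add: nn_integral_cmult sum_distrib_left mult.left_commute cong: sum.cong)
next
  case (add u v)
  with Q have "u \<in> borel_measurable (Q i)" "v \<in> borel_measurable (Q i)" if "i \<in> I" for i
    using that by (simp_all cong: measurable_cong_sets)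
  with add show ?case
    by (simp add: nn_integral_add distrib_left sum.distrib cong: sum.cong)
next
  case (seq U)
  with Q have U: "U n \<in> borel_measurable (Q i)" if "i \<in> I" for i n
    using that by (simp cong: measurable_cong_sets)
  have SUP_U: "(\<integral>\<^sup>+x. (SUP n. U n) x \<partial>M) = (SUP n. \<integral>\<^sup>+x. U n x \<partial>M)"
    if "\<And>n. U n \<in> borel_measurable M" for M :: "'b measure"
    using that \<open>incseq U\<close> by (simp add: image_comp nn_integral_monotone_convergence_SUP)
  have "(\<integral>\<^sup>+x. (SUP n. U n) x \<partial>mix I p Q) = (SUP n. \<Sum>i\<in>I. ennreal (p i) * (\<integral>\<^sup>+x. U n x \<partial>Q i))"
    using seq by (subst SUP_U) auto
  also have "\<dots> = (\<Sum>i\<in>I. SUP n. ennreal (p i) * (\<integral>\<^sup>+x. U n x \<partial>Q i))"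
    using \<open>incseq U\<close>
    by (intro ennreal_SUP_sum) (auto simp: incseq_def le_fun_def intro!: mult_left_mono nn_integral_mono)
  also have "\<dots> = (\<Sum>i\<in>I. ennreal (p i) * (\<integral>\<^sup>+x. (SUP n. U n) x \<partial>Q i))"
    using U by (intro sum.cong refl, subst SUP_U) (auto simp: SUP_mult_left_ennreal)
  finally show ?case .
qed

lemma prob_space_mix:
  assumes I: "finite I" and Q: "\<And>i. i \<in> I \<Longrightarrow> prob_space (Q i) \<and> sets (Q i) = sets borel"
    and p: "\<And>i. i \<in> I \<Longrightarrow> 0 \<le> p i" "sum p I = 1"
  shows "prob_space (mix I p Q)"
proof (rule prob_spaceI)
  have "\<And>i. i \<in> I \<Longrightarrow> emeasure (Q i) UNIV = 1"
    using Q by (metis prob_space.emeasure_space_1 sets_eq_imp_space_eq space_borel)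
  with I Q p show "emeasure (mix I p Q) (space (mix I p Q)) = 1"
    by (simp add: emeasure_mix)
qed

lemma distr_mix:
  assumes I: "finite I" and Q: "\<And>i. i \<in> I \<Longrightarrow> sets (Q i) = sets borel"
    and f: "f \<in> borel_measurable borel"
  shows "distr (mix I p Q) borel f = mix I p (\<lambda>i. distr (Q i) borel f)"
proof (rule measure_eqI)
  fix A assume "A \<in> sets (distr (mix I p Q) borel f)"
  then have A: "A \<in> sets borel" by simp
  have fQ: "f \<in> borel_measurable (Q i)" "space (Q i) = UNIV" if "i \<in> I" for i
    using f Q[OF that] sets_eq_imp_space_eq[OF Q[OF that]] by (simp_all cong: measurable_cong_sets)
  have "emeasure (distr (mix I p Q) borel f) A = (\<Sum>i\<in>I. ennreal (p i) * emeasure (Q i) (f -` A))"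
    using f A I Q by (simp add: emeasure_distr emeasure_mix measurable_sets_borel)
  also have "\<dots> = emeasure (mix I p (\<lambda>i. distr (Q i) borel f)) A"
    using fQ A I by (simp add: emeasure_distr emeasure_mix cong: sum.cong)
  finally show "emeasure (distr (mix I p Q) borel f) A = emeasure (mix I p (\<lambda>i. distr (Q i) borel f)) A" .
qed simp

lemma mix_reindex:
  assumes K: "finite K" and I: "finite I" "f ` K \<subseteq> I"
    and M: "\<And>i. i \<in> I \<Longrightarrow> sets (M i) = sets borel"
    and p: "\<And>k. k \<in> K \<Longrightarrow> 0 \<le> p k"
    and q: "\<And>i. i \<in> I \<Longrightarrow> (\<Sum>k\<in>{k\<in>K. f k = i}. p k) = q i"
  shows "mix K p (\<lambda>k. M (f k)) = mix I q M"
proof (rule measure_eqI)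
  fix A assume "A \<in> sets (mix K p (\<lambda>k. M (f k)))"
  then have A: "A \<in> sets borel" by simp
  have "emeasure (mix K p (\<lambda>k. M (f k))) A = (\<Sum>k\<in>K. ennreal (p k) * emeasure (M (f k)) A)"
    using K I M A by (intro emeasure_mix) auto
  also have "\<dots> = (\<Sum>i\<in>I. \<Sum>k\<in>{k\<in>K. f k = i}. ennreal (p k) * emeasure (M i) A)"
    using K I by (subst sum.group[symmetric, of K I f]) (auto intro!: sum.cong)
  also have "\<dots> = (\<Sum>i\<in>I. ennreal (q i) * emeasure (M i) A)"
  proof (intro sum.cong refl)
    fix i assume "i \<in> I"
    with p q have "(\<Sum>k\<in>{k\<in>K. f k = i}. ennreal (p k)) = ennreal (q i)"
      by (subst sum_ennreal) auto
    then show "(\<Sum>k\<in>{k\<in>K. f k = i}. ennreal (p k) * emeasure (M i) A) = ennreal (q i) * emeasure (M i) A"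
      by (simp add: sum_distrib_right[symmetric])
  qed
  also have "\<dots> = emeasure (mix I q M) A"
    using I M A by (intro emeasure_mix[symmetric]) auto
  finally show "emeasure (mix K p (\<lambda>k. M (f k))) A = emeasure (mix I q M) A" .
qed simp

section \<open>Couplings and transport cost\<close>

lemma borel_measurable_fst: "fst \<in> borel_measurable (borel :: ('a::topological_space \<times> 'b::topological_space) measure)"
  and borel_measurable_snd: "snd \<in> borel_measurable (borel :: ('a::topological_space \<times> 'b::topological_space) measure)"
  by (simp_all add: borel_measurable_continuous_onI continuous_on_fst continuous_on_snd)

lemma couplingsD:
  assumes "\<mu> \<in> couplings M N"
  shows "prob_space M" "sets M = sets borel" "prob_space N" "sets N = sets borel"
    "sets \<mu> = sets borel" "prob_space \<mu>"
proof -
  have \<mu>: "sets \<mu> = sets borel" "prob_space \<mu>"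
    and marg: "distr \<mu> borel fst = M" "distr \<mu> borel snd = N"
    using assms unfolding couplings_def borel_prod by auto
  have "fst \<in> borel_measurable \<mu>" "snd \<in> borel_measurable \<mu>"
    using borel_measurable_fst borel_measurable_snd
    unfolding measurable_cong_sets[OF \<mu>(1) refl] .
  with \<mu>(2) have "prob_space (distr \<mu> borel fst)" "prob_space (distr \<mu> borel snd)"
    by (simp_all add: prob_space.prob_space_distr)
  with marg show "prob_space M" "sets M = sets borel" "prob_space N" "sets N = sets borel"
    by auto
  show "sets \<mu> = sets borel" "prob_space \<mu>" by fact+
qed

lemma pair_measure_in_couplings:
  fixes M N :: "'a::euclidean_space measure"
  assumes M: "prob_space M" "sets M = sets borel" and N: "prob_space N" "sets N = sets borel"
  shows "M \<Otimes>\<^sub>M N \<in> couplings M N"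
proof -
  interpret M: prob_space M by fact
  interpret N: prob_space N by fact
  have s: "sets (M \<Otimes>\<^sub>M N) = sets (borel \<Otimes>\<^sub>M borel)"
    using M N by (simp cong: sets_pair_measure_cong)
  have "distr (M \<Otimes>\<^sub>M N) borel fst = distr (M \<Otimes>\<^sub>M N) M fst"
    using M(2) by (intro distr_cong) simp_all
  then have marg1: "distr (M \<Otimes>\<^sub>M N) borel fst = M"
    by (simp add: N.distr_pair_fst)
  have marg2: "distr (M \<Otimes>\<^sub>M N) borel snd = N"
  proof (rule measure_eqI)
    fix A assume "A \<in> sets (distr (M \<Otimes>\<^sub>M N) borel snd)"
    then have A: "A \<in> sets N" using N by simp
    have "snd -` A \<inter> space (M \<Otimes>\<^sub>M N) = space M \<times> A"
      using A sets.sets_into_space by (auto simp: space_pair_measure)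
    with A s show "emeasure (distr (M \<Otimes>\<^sub>M N) borel snd) A = emeasure N A"
      by (simp add: emeasure_distr N.emeasure_pair_measure_Times M.emeasure_space_1 N(2)
          cong: measurable_cong_sets)
  qed (use N in simp)
  with s marg1 show ?thesis
    unfolding couplings_def by (simp add: prob_space_pair M(1) N(1))
qed

lemma mix_in_couplings:
  fixes M N :: "'k \<Rightarrow> 'a::euclidean_space measure"
  assumes K: "finite K" and p: "\<And>k. k \<in> K \<Longrightarrow> 0 \<le> p k" "sum p K = 1"
    and G: "\<And>k. k \<in> K \<Longrightarrow> G k \<in> couplings (M k) (N k)"
  shows "mix K p G \<in> couplings (mix K p M) (mix K p N)"
proof -
  note G_props = couplingsD[OF G]
  have "distr (mix K p G) borel fst = mix K p (\<lambda>k. distr (G k) borel fst)"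
    "distr (mix K p G) borel snd = mix K p (\<lambda>k. distr (G k) borel snd)"
    using K G_props by (simp_all add: distr_mix borel_measurable_fst borel_measurable_snd)
  moreover have "mix K p (\<lambda>k. distr (G k) borel fst) = mix K p M"
    "mix K p (\<lambda>k. distr (G k) borel snd) = mix K p N"
    using G by (auto intro!: mix_cong simp: couplings_def)
  ultimately show ?thesis
    using K p G_props unfolding couplings_def borel_prod by (simp add: prob_space_mix)
qed

lemma mix_in_couplings_of_plan:
  fixes M N :: "'i \<Rightarrow> 'a::euclidean_space measure"
  assumes I: "finite I" and p: "\<And>k. k \<in> I \<times> I \<Longrightarrow> 0 \<le> p k"
    and rows: "\<And>i. i \<in> I \<Longrightarrow> (\<Sum>j\<in>I. p (i, j)) = a i"
    and cols: "\<And>j. j \<in> I \<Longrightarrow> (\<Sum>i\<in>I. p (i, j)) = b j"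
    and a: "sum a I = 1"
    and M: "\<And>i. i \<in> I \<Longrightarrow> sets (M i) = sets borel" and N: "\<And>i. i \<in> I \<Longrightarrow> sets (N i) = sets borel"
    and G: "\<And>i j. i \<in> I \<Longrightarrow> j \<in> I \<Longrightarrow> G (i, j) \<in> couplings (M i) (N j)"
  shows "mix (I \<times> I) p G \<in> couplings (mix I a M) (mix I b N)"
proof -
  have fibres: "{k \<in> I \<times> I. fst k = i} = {i} \<times> I" "{k \<in> I \<times> I. snd k = i} = I \<times> {i}"
    if "i \<in> I" for i
    using that by auto
  have "sum p (I \<times> I) = 1"
    using I rows a by (simp add: sum.cartesian_product')
  then have "mix (I \<times> I) p G \<in> couplings (mix (I \<times> I) p (\<lambda>k. M (fst k))) (mix (I \<times> I) p (\<lambda>k. N (snd k)))"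
    using I p G by (intro mix_in_couplings) auto
  moreover have "mix (I \<times> I) p (\<lambda>k. M (fst k)) = mix I a M" "mix (I \<times> I) p (\<lambda>k. N (snd k)) = mix I b N"
    using I p M N rows cols by (auto intro!: mix_reindex simp: fibres sum.cartesian_product')
  ultimately show ?thesis by simp
qed

definition transport_cost :: "('a::real_normed_vector \<times> 'a) measure \<Rightarrow> ennreal" where
  "transport_cost \<mu> = (\<integral>\<^sup>+z. ennreal ((norm (fst z - snd z))\<^sup>2) \<partial>\<mu>)"

lemma W2_eq_transport_cost: "W2 M N = sqrt (enn2real (INF \<mu>\<in>couplings M N. transport_cost \<mu>))"
  by (simp add: W2_def transport_cost_def)

lemma W2_nonneg: "0 \<le> W2 M N"
  by (simp add: W2_def)

lemma W2_le_sqrt: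
  assumes "(INF \<mu>\<in>couplings M N. transport_cost \<mu>) \<le> ennreal x" "0 \<le> x"
  shows "W2 M N \<le> sqrt x"
  using enn2real_mono[OF assms(1)] assms(2) by (simp add: W2_eq_transport_cost)

lemma transport_cost_mix:
  fixes G :: "'i \<Rightarrow> ('a::euclidean_space \<times> 'a) measure"
  assumes "finite K" "\<And>k. k \<in> K \<Longrightarrow> sets (G k) = sets borel"
  shows "transport_cost (mix K p G) = (\<Sum>k\<in>K. ennreal (p k) * transport_cost (G k))"
  unfolding transport_cost_def using assms
  by (intro nn_integral_mix measurable_compose[OF _ measurable_ennreal] borel_measurable_continuous_onI
      continuous_intros)

lemma transport_cost_le_diameter:
  fixes M N :: "'a::euclidean_space measure"
  assumes \<mu>: "\<mu> \<in> couplings M N" and M: "AE x in M. norm x \<le> C" and N: "AE x in N. norm x \<le> C"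
  shows "transport_cost \<mu> \<le> ennreal (4 * C\<^sup>2)"
proof -
  interpret prob_space \<mu> using couplingsD[OF \<mu>] by simp
  have s: "sets \<mu> = sets (borel \<Otimes>\<^sub>M borel)" and marg: "distr \<mu> borel fst = M" "distr \<mu> borel snd = N"
    using \<mu> by (auto simp: couplings_def)
  have "AE z in \<mu>. norm (fst z) \<le> C" "AE z in \<mu>. norm (snd z) \<le> C"
    using M N unfolding marg[symmetric] by (simp_all add: AE_distr_iff s cong: measurable_cong_sets)
  then have "AE z in \<mu>. ennreal ((norm (fst z - snd z))\<^sup>2) \<le> ennreal (4 * C\<^sup>2)"
  proof eventually_elim
    case (elim z)
    then have "norm (fst z - snd z) \<le> 2 * C"
      using norm_triangle_ineq4[of "fst z" "snd z"] by simp
    then have "(norm (fst z - snd z))\<^sup>2 \<le> (2 * C)\<^sup>2" by (intro power_mono) auto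
    then show ?case by (simp add: power_mult_distrib)
  qed
  then have "transport_cost \<mu> \<le> (\<integral>\<^sup>+z. ennreal (4 * C\<^sup>2) \<partial>\<mu>)"
    unfolding transport_cost_def by (rule nn_integral_mono_AE)
  then show ?thesis by (simp add: emeasure_space_1)
qed

lemma transport_cost_INF_le_W2_sq:
  assumes \<mu>: "\<mu> \<in> couplings M N" "transport_cost \<mu> < \<top>" and W: "W2 M N \<le> \<epsilon>"
  shows "(INF \<nu>\<in>couplings M N. transport_cost \<nu>) \<le> ennreal (\<epsilon>\<^sup>2)"
proof -
  define R where "R = (INF \<nu>\<in>couplings M N. transport_cost \<nu>)"
  have "R \<le> transport_cost \<mu>" unfolding R_def using \<mu>(1) by (rule INF_lower)
  with \<mu>(2) have R: "ennreal (enn2real R) = R" by (simp add: top.not_eq_extremum)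
  have "sqrt (enn2real R) \<le> \<epsilon>" using W by (simp add: W2_eq_transport_cost R_def)
  then have "(sqrt (enn2real R))\<^sup>2 \<le> \<epsilon>\<^sup>2" by (intro power_mono) auto
  then have "enn2real R \<le> \<epsilon>\<^sup>2" by simp
  then show ?thesis unfolding R_def[symmetric] by (subst R[symmetric]) (rule ennreal_leI)
qed

lemma exists_coupling_transport_cost_less:
  fixes M N :: "'a::euclidean_space measure"
  assumes M: "prob_space M" "sets M = sets borel" "AE x in M. norm x \<le> C"
    and N: "prob_space N" "sets N = sets borel" "AE x in N. norm x \<le> C"
    and W: "W2 M N \<le> \<epsilon>" and c: "\<epsilon>\<^sup>2 < c"
  shows "\<exists>\<gamma>\<in>couplings M N. transport_cost \<gamma> < ennreal c"
proof -
  have prod: "M \<Otimes>\<^sub>M N \<in> couplings M N"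
    using M N by (intro pair_measure_in_couplings)
  moreover have "transport_cost (M \<Otimes>\<^sub>M N) < \<top>"
    using transport_cost_le_diameter[OF prod M(3) N(3)] by (simp add: order_le_less_trans)
  ultimately have "(INF \<gamma>\<in>couplings M N. transport_cost \<gamma>) \<le> ennreal (\<epsilon>\<^sup>2)"
    using W by (rule transport_cost_INF_le_W2_sq)
  also have "\<dots> < ennreal c"
    using c by (subst ennreal_less_iff) auto
  finally show ?thesis unfolding INF_less_iff .
qed

lemma AE_norm_le_imp_nonneg:
  assumes "prob_space P" "AE x in P. norm x \<le> C"
  shows "0 \<le> C"
proof -
  have "AE x in P. 0 \<le> C"
    using assms(2) by eventually_elim (meson norm_ge_zero order_trans)
  then show ?thesis by (simp add: prob_space.AE_const[OF assms(1)])
qed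

section \<open>Maximal coupling of weight vectors\<close>

definition tv_distance :: "'i set \<Rightarrow> ('i \<Rightarrow> real) \<Rightarrow> ('i \<Rightarrow> real) \<Rightarrow> real" where
  "tv_distance I a b = (\<Sum>i\<in>I. \<bar>a i - b i\<bar>) / 2"

lemma tv_distance_nonneg: "0 \<le> tv_distance I a b"
  by (simp add: tv_distance_def sum_nonneg)

lemma tv_distance_commute: "tv_distance I a b = tv_distance I b a"
  by (simp add: tv_distance_def abs_minus_commute)

lemma sum_diff_min_eq_tv_distance:
  assumes "sum a I = sum b I"
  shows "(\<Sum>i\<in>I. a i - min (a i) (b i)) = tv_distance I a b"
proof -
  have "(\<Sum>i\<in>I. a i - min (a i) (b i)) = (\<Sum>i\<in>I. (\<bar>a i - b i\<bar> + (a i - b i)) / 2)"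
    by (intro sum.cong) auto
  also have "\<dots> = ((\<Sum>i\<in>I. \<bar>a i - b i\<bar>) + (sum a I - sum b I)) / 2"
    by (simp add: sum_divide_distrib[symmetric] sum.distrib sum_subtractf)
  finally show ?thesis using assms by (simp add: tv_distance_def)
qed

text \<open>If \<open>tv_distance I a b = 0\<close>, all excess factors \<open>a i - min (a i) (b i)\<close> vanish, so
  the division by zero is harmless.\<close>
definition maximal_coupling :: "'i set \<Rightarrow> ('i \<Rightarrow> real) \<Rightarrow> ('i \<Rightarrow> real) \<Rightarrow> 'i \<times> 'i \<Rightarrow> real" where
  "maximal_coupling I a b = (\<lambda>(i, j). (if i = j then min (a i) (b i) else 0) +
      (a i - min (a i) (b i)) * (b j - min (a j) (b j)) / tv_distance I a b)"

lemma maximal_coupling_nonneg: "0 \<le> a i \<Longrightarrow> 0 \<le> b i \<Longrightarrow> 0 \<le> maximal_coupling I a b (i, j)"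
  unfolding maximal_coupling_def using tv_distance_nonneg[of I a b]
  by (auto intro!: add_nonneg_nonneg divide_nonneg_nonneg mult_nonneg_nonneg)

lemma maximal_coupling_diagonal: "maximal_coupling I a b (i, i) = min (a i) (b i)"
  by (simp add: maximal_coupling_def min_def)

lemma maximal_coupling_swap: "maximal_coupling I a b (i, j) = maximal_coupling I b a (j, i)"
  by (simp add: maximal_coupling_def tv_distance_commute min.commute)

lemma maximal_coupling_row_sum:
  assumes I: "finite I" and sums: "sum a I = sum b I" and i: "i \<in> I"
  shows "(\<Sum>j\<in>I. maximal_coupling I a b (i, j)) = a i"
proof -
  define tv where "tv = tv_distance I a b"
  have excess_b: "(\<Sum>j\<in>I. b j - min (a j) (b j)) = tv"
    using sum_diff_min_eq_tv_distance[of b I a] sums by (simp add: tv_def tv_distance_commute min.commute)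
  have "a i - min (a i) (b i) \<le> (\<Sum>k\<in>I. a k - min (a k) (b k))"
    using I i by (intro member_le_sum) auto
  then have excess_a: "a i - min (a i) (b i) \<le> tv"
    using sum_diff_min_eq_tv_distance[OF sums] by (simp add: tv_def)
  have "(\<Sum>j\<in>I. maximal_coupling I a b (i, j))
      = (\<Sum>j\<in>I. if i = j then min (a i) (b i) else 0)
        + (a i - min (a i) (b i)) * (\<Sum>j\<in>I. b j - min (a j) (b j)) / tv"
    by (simp add: maximal_coupling_def sum.distrib sum_distrib_left sum_divide_distrib tv_def)
  also have "\<dots> = min (a i) (b i) + (a i - min (a i) (b i)) * tv / tv"
    using I i excess_b by simp
  also have "\<dots> = a i"
    using excess_a by (cases "tv = 0") auto
  finally show ?thesis .
qed

lemma maximal_coupling_col_sum: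
  assumes "finite I" "sum a I = sum b I" "j \<in> I"
  shows "(\<Sum>i\<in>I. maximal_coupling I a b (i, j)) = b j"
  using maximal_coupling_row_sum[of I b a j] assms by (simp add: maximal_coupling_swap[of I a b])

lemma maximal_coupling_expected_cost:
  assumes I: "finite I" and a: "sum a I = 1" and b: "sum b I = 1"
  shows "(\<Sum>(i, j)\<in>I \<times> I. maximal_coupling I a b (i, j) * (if i = j then c else D))
       = c + (D - c) * tv_distance I a b"
proof -
  let ?p = "maximal_coupling I a b"
  have total: "(\<Sum>(i, j)\<in>I \<times> I. ?p (i, j)) = 1"
    using I a b by (simp add: sum.cartesian_product' maximal_coupling_row_sum)
  have "(\<Sum>(i, j)\<in>I \<times> I. if i = j then ?p (i, j) else 0) = (\<Sum>i\<in>I. min (a i) (b i))"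
    using I by (simp add: sum.cartesian_product[symmetric] maximal_coupling_diagonal if_distrib cong: if_cong)
  also have "\<dots> = 1 - tv_distance I a b"
    using sum_diff_min_eq_tv_distance[of a I b] a b by (simp add: sum_subtractf)
  finally have diagonal: "(\<Sum>(i, j)\<in>I \<times> I. if i = j then ?p (i, j) else 0) = 1 - tv_distance I a b" .
  have "(\<Sum>(i, j)\<in>I \<times> I. ?p (i, j) * (if i = j then c else D))
      = D * (\<Sum>(i, j)\<in>I \<times> I. ?p (i, j)) + (c - D) * (\<Sum>(i, j)\<in>I \<times> I. if i = j then ?p (i, j) else 0)"
    by (auto simp: sum_distrib_left sum.distrib[symmetric] algebra_simps intro!: sum.cong)
  then show ?thesis using total diagonal by (simp add: algebra_simps)
qed

lemma mix_couplings_transport_cost_le: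
  fixes M N :: "'i \<Rightarrow> 'a::euclidean_space measure"
  assumes I: "finite I"
    and a: "\<And>i. i \<in> I \<Longrightarrow> 0 \<le> a i" "sum a I = 1" and b: "\<And>i. i \<in> I \<Longrightarrow> 0 \<le> b i" "sum b I = 1"
    and \<gamma>: "\<And>i. i \<in> I \<Longrightarrow> \<gamma> i \<in> couplings (M i) (N i) \<and> transport_cost (\<gamma> i) \<le> ennreal c"
    and D: "\<And>i j. i \<in> I \<Longrightarrow> j \<in> I \<Longrightarrow> transport_cost (M i \<Otimes>\<^sub>M N j) \<le> ennreal D"
    and cD: "0 \<le> c" "0 \<le> D"
  shows "\<exists>\<mu>\<in>couplings (mix I a M) (mix I b N). transport_cost \<mu> \<le> ennreal (c + (D - c) * tv_distance I a b)"
proof -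
  define p where "p = maximal_coupling I a b"
  define G where "G = (\<lambda>(i, j). if i = j then \<gamma> i else M i \<Otimes>\<^sub>M N j)"
  have marginals: "prob_space (M i)" "sets (M i) = sets borel" "prob_space (N i)" "sets (N i) = sets borel"
    if "i \<in> I" for i
    using couplingsD[of "\<gamma> i" "M i" "N i"] \<gamma> that by auto
  have G: "G (i, j) \<in> couplings (M i) (N j)" "transport_cost (G (i, j)) \<le> ennreal (if i = j then c else D)"
    if "i \<in> I" "j \<in> I" for i j
    using that \<gamma> D[OF that] marginals by (auto simp: G_def pair_measure_in_couplings)
  have p: "0 \<le> p k" if "k \<in> I \<times> I" for k
    using that a b by (auto simp: p_def maximal_coupling_nonneg)
  have "sets (G k) = sets borel" if "k \<in> I \<times> I" for k
    using that by (cases k) (auto intro!: couplingsD(5)[OF G(1)])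
  then have "transport_cost (mix (I \<times> I) p G) = (\<Sum>(i, j)\<in>I \<times> I. ennreal (p (i, j)) * transport_cost (G (i, j)))"
    using I by (simp add: transport_cost_mix case_prod_beta)
  also have "\<dots> \<le> (\<Sum>(i, j)\<in>I \<times> I. ennreal (p (i, j)) * ennreal (if i = j then c else D))"
    using G(2) by (intro sum_mono) (auto intro!: mult_left_mono)
  also have "\<dots> = ennreal (\<Sum>(i, j)\<in>I \<times> I. p (i, j) * (if i = j then c else D))"
    using p cD by (subst sum_ennreal[symmetric]) (auto intro!: sum.cong simp: ennreal_mult)
  also have "\<dots> = ennreal (c + (D - c) * tv_distance I a b)"
    using I a b by (simp add: p_def maximal_coupling_expected_cost)
  finally have "transport_cost (mix (I \<times> I) p G) \<le> ennreal (c + (D - c) * tv_distance I a b)" .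
  moreover have "mix (I \<times> I) p G \<in> couplings (mix I a M) (mix I b N)"
    using I a b p G marginals
    by (intro mix_in_couplings_of_plan) (auto simp: p_def maximal_coupling_row_sum maximal_coupling_col_sum)
  ultimately show ?thesis by blast
qed

lemma W2_mix_le:
  fixes M N :: "'i \<Rightarrow> 'a::euclidean_space measure"
  assumes I: "finite I"
    and a: "\<And>i. i \<in> I \<Longrightarrow> 0 \<le> a i" "sum a I = 1" and b: "\<And>i. i \<in> I \<Longrightarrow> 0 \<le> b i" "sum b I = 1"
    and M: "\<And>i. i \<in> I \<Longrightarrow> prob_space (M i) \<and> sets (M i) = sets borel \<and> (AE x in M i. norm x \<le> C)"
    and N: "\<And>i. i \<in> I \<Longrightarrow> prob_space (N i) \<and> sets (N i) = sets borel \<and> (AE x in N i. norm x \<le> C)"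
    and W: "\<And>i. i \<in> I \<Longrightarrow> W2 (M i) (N i) \<le> \<epsilon>"
  shows "W2 (mix I a M) (mix I b N) \<le> sqrt (\<epsilon>\<^sup>2 + 4 * C\<^sup>2 * tv_distance I a b)"
proof -
  define tv where "tv = tv_distance I a b"
  have tv: "0 \<le> tv" by (simp add: tv_def tv_distance_nonneg)
  have prod_cost: "transport_cost (M i \<Otimes>\<^sub>M N j) \<le> ennreal (4 * C\<^sup>2)" if "i \<in> I" "j \<in> I" for i j
    using M[OF that(1)] N[OF that(2)] pair_measure_in_couplings transport_cost_le_diameter by blast
  have "(INF \<mu>\<in>couplings (mix I a M) (mix I b N). transport_cost \<mu>) \<le> ennreal (\<epsilon>\<^sup>2 + 4 * C\<^sup>2 * tv) + ennreal \<delta>"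
    if \<delta>: "0 < \<delta>" for \<delta>
  proof -
    define c where "c = \<epsilon>\<^sup>2 + \<delta>"
    have c: "0 \<le> c" "\<epsilon>\<^sup>2 < c"
      using \<delta> by (simp_all add: c_def)
    have "\<exists>\<gamma>\<in>couplings (M i) (N i). transport_cost \<gamma> < ennreal c" if "i \<in> I" for i
      using M[OF that] N[OF that] W[OF that] c(2) by (intro exists_coupling_transport_cost_less) auto
    then obtain \<gamma> where "\<And>i. i \<in> I \<Longrightarrow> \<gamma> i \<in> couplings (M i) (N i) \<and> transport_cost (\<gamma> i) \<le> ennreal c"
      by (metis less_imp_le)
    then have "\<exists>\<mu>\<in>couplings (mix I a M) (mix I b N). transport_cost \<mu> \<le> ennreal (c + (4 * C\<^sup>2 - c) * tv)"
      using I a b prod_cost c(1) unfolding tv_def by (intro mix_couplings_transport_cost_le) auto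
    then obtain \<mu> where \<mu>: "\<mu> \<in> couplings (mix I a M) (mix I b N)"
      and cost: "transport_cost \<mu> \<le> ennreal (c + (4 * C\<^sup>2 - c) * tv)"
      by blast
    note cost
    also have "\<dots> \<le> ennreal (\<epsilon>\<^sup>2 + 4 * C\<^sup>2 * tv + \<delta>)"
      using mult_nonneg_nonneg[OF c(1) tv] by (intro ennreal_leI) (simp add: c_def algebra_simps)
    also have "\<dots> = ennreal (\<epsilon>\<^sup>2 + 4 * C\<^sup>2 * tv) + ennreal \<delta>"
      using tv \<delta> by (intro ennreal_plus) auto
    finally show ?thesis using \<mu> by (meson INF_lower order_trans)
  qed
  then have "(INF \<mu>\<in>couplings (mix I a M) (mix I b N). transport_cost \<mu>) \<le> ennreal (\<epsilon>\<^sup>2 + 4 * C\<^sup>2 * tv)"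
    by (rule ennreal_le_epsilon)
  then show ?thesis using tv by (simp add: W2_le_sqrt tv_def)
qed

section \<open>Exponential tilts\<close>

lemma integrable_exp_inner:
  fixes P :: "'a::euclidean_space measure"
  assumes "finite_measure P" "sets P = sets borel" "AE x in P. norm x \<le> C"
  shows "integrable P (\<lambda>x. exp (v \<bullet> x))"
proof -
  have "AE x in P. norm (exp (v \<bullet> x)) \<le> exp (norm v * C)"
    using assms(3)
  proof eventually_elim
    case (elim x)
    have "v \<bullet> x \<le> norm v * norm x" by (simp add: norm_cauchy_schwarz)
    also have "\<dots> \<le> norm v * C" using elim by (simp add: mult_left_mono)
    finally show ?case by simp
  qed
  moreover have "(\<lambda>x. exp (v \<bullet> x)) \<in> borel_measurable P"
    unfolding measurable_cong_sets[OF assms(2) refl] by measurable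
  ultimately show ?thesis by (rule finite_measure.integrable_const_bound[OF assms(1)])
qed

lemma sets_exp_tilt [simp]: "sets (exp_tilt P v) = sets P"
  by (simp add: exp_tilt_def)

context
  fixes P :: "'a::euclidean_space measure" and C :: real
  assumes P: "prob_space P" "sets P = sets borel" and bounded: "AE x in P. norm x \<le> C"
begin

lemma tilt_const_pos: "0 < tilt_const P v"
proof -
  interpret prob_space P by (rule P(1))
  have int: "integrable P (\<lambda>x. exp (v \<bullet> x))"
    using integrable_exp_inner[OF prob_space.axioms(1)[OF P(1)] P(2) bounded] .
  then have "tilt_const P v \<noteq> 0"
    by (simp add: tilt_const_def integral_nonneg_eq_0_iff_AE AE_False)
  moreover have "0 \<le> tilt_const P v" by (simp add: tilt_const_def)
  ultimately show ?thesis by simp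
qed

lemma prob_space_exp_tilt: "prob_space (exp_tilt P v)"
proof (rule prob_spaceI)
  have int: "integrable P (\<lambda>x. exp (v \<bullet> x))"
    using integrable_exp_inner[OF prob_space.axioms(1)[OF P(1)] P(2) bounded] .
  have meas: "(\<lambda>x. ennreal (exp (v \<bullet> x) / tilt_const P v)) \<in> borel_measurable P"
    unfolding measurable_cong_sets[OF P(2) refl] by measurable
  have "emeasure (exp_tilt P v) (space (exp_tilt P v))
      = (\<integral>\<^sup>+x. ennreal (exp (v \<bullet> x) / tilt_const P v) * indicator (space P) x \<partial>P)"
    unfolding exp_tilt_def space_density by (rule emeasure_density[OF meas sets.top])
  also have "\<dots> = (\<integral>\<^sup>+x. ennreal (exp (v \<bullet> x) / tilt_const P v) \<partial>P)"
    by (intro nn_integral_cong) simp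
  also have "\<dots> = ennreal (tilt_const P v / tilt_const P v)"
    using int tilt_const_pos by (subst nn_integral_eq_integral) (auto simp: tilt_const_def)
  finally show "emeasure (exp_tilt P v) (space (exp_tilt P v)) = 1"
    using tilt_const_pos[of v] by simp
qed

lemma AE_exp_tilt: "AE x in exp_tilt P v. norm x \<le> C"
proof -
  have "(\<lambda>x. ennreal (exp (v \<bullet> x) / tilt_const P v)) \<in> borel_measurable P"
    unfolding measurable_cong_sets[OF P(2) refl] by measurable
  with bounded show ?thesis
    unfolding exp_tilt_def by (subst AE_density) auto
qed

end

lemma abs_cross_diff_le:
  fixes x x' y y' \<eta> :: real
  assumes "0 < x" "0 < y" "(1 - \<eta>) * x \<le> x'" "x' \<le> (1 + \<eta>) * x" "(1 - \<eta>) * y \<le> y'" "y' \<le> (1 + \<eta>) * y"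
  shows "\<bar>x' * y - x * y'\<bar> \<le> 2 * \<eta> * x * y"
proof -
  have "x' * y \<le> (1 + \<eta>) * x * y" "(1 - \<eta>) * x * y \<le> x' * y"
    "x * y' \<le> x * ((1 + \<eta>) * y)" "x * ((1 - \<eta>) * y) \<le> x * y'"
    using assms by (simp_all add: mult_right_mono mult_left_mono)
  then show ?thesis by (simp add: algebra_simps abs_le_iff)
qed

lemma normalized_weights:
  fixes u :: "'i \<Rightarrow> real"
  assumes "finite I" "I \<noteq> {}" "\<And>i. i \<in> I \<Longrightarrow> 0 < u i"
  shows "\<And>i. i \<in> I \<Longrightarrow> 0 \<le> u i / sum u I" "(\<Sum>i\<in>I. u i / sum u I) = 1"
proof -
  have "0 < sum u I" using assms by (simp add: sum_pos)
  with assms show "\<And>i. i \<in> I \<Longrightarrow> 0 \<le> u i / sum u I" "(\<Sum>i\<in>I. u i / sum u I) = 1"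
    by (simp_all add: less_imp_le sum_divide_distrib[symmetric])
qed

lemma tv_distance_normalize_le:
  fixes u u' :: "'i \<Rightarrow> real"
  assumes I: "finite I" "I \<noteq> {}" and u: "\<And>i. i \<in> I \<Longrightarrow> 0 < u i"
    and u': "\<And>i. i \<in> I \<Longrightarrow> (1 - \<eta>) * u i \<le> u' i \<and> u' i \<le> (1 + \<eta>) * u i"
    and \<eta>: "0 \<le> \<eta>" "\<eta> < 1"
  shows "tv_distance I (\<lambda>i. u' i / sum u' I) (\<lambda>i. u i / sum u I) \<le> \<eta> / (1 - \<eta>)"
proof -
  define S S' where "S = sum u I" and "S' = sum u' I"
  have S: "0 < S" using I u by (simp add: S_def sum_pos)
  have SS': "(1 - \<eta>) * S \<le> S'"
    unfolding S_def S'_def sum_distrib_left using u' by (intro sum_mono) auto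
  with S \<eta> have S': "0 < S'" by (smt (verit) mult_pos_pos)
  have cross: "\<bar>u' i * S - u i * S'\<bar> \<le> 2 * \<eta> * u i * S" if i: "i \<in> I" for i
  proof -
    have "\<bar>u' i * S - u i * S'\<bar> = \<bar>\<Sum>j\<in>I. u' i * u j - u i * u' j\<bar>"
      by (simp add: S_def S'_def sum_distrib_left sum_subtractf)
    also have "\<dots> \<le> (\<Sum>j\<in>I. 2 * \<eta> * u i * u j)"
      using u u' i by (intro order_trans[OF sum_abs] sum_mono abs_cross_diff_le) auto
    also have "\<dots> = 2 * \<eta> * u i * S" by (simp add: S_def sum_distrib_left)
    finally show ?thesis .
  qed
  have "\<bar>u' i / S' - u i / S\<bar> \<le> 2 * \<eta> / (1 - \<eta>) * (u i / S)" if i: "i \<in> I" for i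
  proof -
    have "\<bar>u' i / S' - u i / S\<bar> = \<bar>u' i * S - u i * S'\<bar> / (S' * S)"
      using S S' by (simp add: field_simps)
    also have "\<dots> \<le> 2 * \<eta> * u i / S'"
      using S S' cross[OF i] by (simp add: divide_right_mono field_simps)
    also have "\<dots> \<le> 2 * \<eta> * u i / ((1 - \<eta>) * S)"
      using u[OF i] \<eta> S S' SS' by (intro divide_left_mono) auto
    also have "\<dots> = 2 * \<eta> / (1 - \<eta>) * (u i / S)" by simp
    finally show ?thesis .
  qed
  then have "(\<Sum>i\<in>I. \<bar>u' i / S' - u i / S\<bar>) \<le> (\<Sum>i\<in>I. 2 * \<eta> / (1 - \<eta>) * (u i / S))"
    by (rule sum_mono)
  also have "\<dots> = 2 * \<eta> / (1 - \<eta>)"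
    using S by (simp add: sum_distrib_left[symmetric] sum_divide_distrib[symmetric] S_def)
  finally show ?thesis by (simp add: tv_distance_def S_def S'_def mult.commute)
qed

theorem lemmaB1:
  fixes P :: "'a::euclidean_space measure"
    and C \<eta> \<epsilon>lin :: real and m :: nat
    and v :: "nat \<Rightarrow> 'a" and w Zhat :: "nat \<Rightarrow> real"
    and Phat :: "nat \<Rightarrow> 'a measure"
  assumes P_prob: "prob_space P" and P_sets: "sets P = sets borel"
    and P_supp: "AE x in P. norm x \<le> C"
    and m_pos: "0 < m"
    and w_pos: "\<And>i. i < m \<Longrightarrow> 0 < w i"
    and eta: "0 < \<eta>" "\<eta> < 1"
    and Zhat: "\<And>i. i < m \<Longrightarrow> (1 - \<eta>) * tilt_const P (v i) \<le> Zhat i \<and>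
                               Zhat i \<le> (1 + \<eta>) * tilt_const P (v i)"
    and Phat_prob: "\<And>i. i < m \<Longrightarrow> prob_space (Phat i) \<and> sets (Phat i) = sets borel"
    and Phat_W2: "\<And>i. i < m \<Longrightarrow> W2 (Phat i) (exp_tilt P (v i)) \<le> \<epsilon>lin"
    and Phat_supp: "\<And>i. i < m \<Longrightarrow> (AE x in Phat i. norm x \<le> C)"
  shows "W2 (mixture m (\<lambda>i. w i * Zhat i / (\<Sum>j<m. w j * Zhat j)) Phat)
            (mixture m (\<lambda>i. w i * tilt_const P (v i) / (\<Sum>j<m. w j * tilt_const P (v j)))
                       (\<lambda>i. exp_tilt P (v i)))
         \<le> \<epsilon>lin + 2 * C * sqrt (\<eta> / (1 - \<eta>))"
proof -
  define u u' where "u = (\<lambda>i. w i * tilt_const P (v i))" and "u' = (\<lambda>i. w i * Zhat i)"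
  define a b where "a = (\<lambda>i. u' i / sum u' {..<m})" and "b = (\<lambda>i. u i / sum u {..<m})"
  define \<tau> where "\<tau> = \<eta> / (1 - \<eta>)"
  note tilt = tilt_const_pos[OF P_prob P_sets P_supp] prob_space_exp_tilt[OF P_prob P_sets P_supp]
    AE_exp_tilt[OF P_prob P_sets P_supp]
  have C: "0 \<le> C" using P_prob P_supp by (rule AE_norm_le_imp_nonneg)
  have \<epsilon>: "0 \<le> \<epsilon>lin" using W2_nonneg Phat_W2[OF m_pos] by (rule order_trans)
  have u: "0 < u i" "(1 - \<eta>) * u i \<le> u' i \<and> u' i \<le> (1 + \<eta>) * u i" if "i < m" for i
    using w_pos[OF that] Zhat[OF that] tilt(1) by (simp_all add: u_def u'_def)
  then have u': "0 < u' i" if "i < m" for i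
    using that eta by (smt (verit) mult_pos_pos)
  have tv: "tv_distance {..<m} a b \<le> \<tau>"
    unfolding a_def b_def \<tau>_def using m_pos u eta by (intro tv_distance_normalize_le) auto
  have "W2 (mix {..<m} a Phat) (mix {..<m} b (\<lambda>i. exp_tilt P (v i)))
      \<le> sqrt (\<epsilon>lin\<^sup>2 + 4 * C\<^sup>2 * tv_distance {..<m} a b)"
    unfolding a_def b_def using m_pos u u' Phat_prob Phat_supp Phat_W2 tilt P_sets
    by (intro W2_mix_le normalized_weights) auto
  also have "\<dots> \<le> sqrt (\<epsilon>lin\<^sup>2 + (2 * C * sqrt \<tau>)\<^sup>2)"
    using mult_left_mono[OF tv, of "4 * C\<^sup>2"] eta by (simp add: power_mult_distrib \<tau>_def)
  also have "\<dots> \<le> \<epsilon>lin + 2 * C * sqrt \<tau>"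
    using \<epsilon> C eta by (intro sqrt_sum_squares_le_sum) (auto simp: \<tau>_def)
  finally show ?thesis by (simp add: mixture_eq_mix a_def b_def u_def u'_def \<tau>_def)
qed

end
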